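(* Let $n\ge2$ be an integer, $x>0$ and $\alpha\in\mathbb{R}$. Then $\det A_{n;3}(x,x^\alpha)=\det A_{n;3}(x,x^{1-\alpha})$, $p_n(x,x^\alpha)=p_n(x,x^{1-\alpha})$ and $q_n(x,x^\alpha)=q_n(x,x^{1-\alpha})$.
   Context: For an integer $n\ge 2$ and $y\ge0$, $y\neq 1$, let $k_n(y)=\frac1n\sum_{l=1}^{n}\frac{1-y\cos(2\pi l/n)}{(1+y^2-2y\cos(2\pi l/n))^{3/2}}-1$, and set $k_n(1)=\delta_n:=\frac{1}{4n}\sum_{l=1}^{n-1}\frac{1}{\sin(\pi l/n)}-1$. For $x_1,x_2>0$ define $A_{n;3}(x_1,x_2)=\begin{pmatrix}\delta_n&k_n(x_2/x_1)&k_n(1/x_1)\\ k_n(x_1/x_2)&\delta_n&k_n(1/x_2)\\ k_n(x_1)&k_n(x_2)&\delta_n\end{pmatrix}$, $p_n(x_1,x_2)=-k_n(x_1)k_n(1/x_1)-k_n(x_2)k_n(1/x_2)-k_n(x_1/x_2)k_n(x_2/x_1)$ and $q_n(x_1,x_2)=k_n(x_1)k_n(1/x_2)k_n(x_2/x_1)+k_n(x_2)k_n(1/x_1)k_n(x_1/x_2)$, so that $\det A_{n;3}=\delta_n^3+p_n\delta_n+q_n$. *)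

theory Defs
  imports "HOL-Analysis.Analysis"
begin

definition delta :: "nat \<Rightarrow> real" where
  "delta n = (1 / (4 * real n)) * (\<Sum>l=1..n-1. 1 / sin (pi * real l / real n)) - 1"

definition kn :: "nat \<Rightarrow> real \<Rightarrow> real" where
  "kn n y = (if y = 1 then delta n else
     (1 / real n) * (\<Sum>l=1..n. (1 - y * cos (2 * pi * real l / real n)) /
        (1 + y\<^sup>2 - 2 * y * cos (2 * pi * real l / real n)) powr (3/2)) - 1)"

definition A3 :: "nat \<Rightarrow> real \<Rightarrow> real \<Rightarrow> real^3^3" where
  "A3 n x1 x2 = vector [
     vector [delta n, kn n (x2 / x1), kn n (1 / x1)],
     vector [kn n (x1 / x2), delta n, kn n (1 / x2)],
     vector [kn n x1, kn n x2, delta n]]"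

definition pn :: "nat \<Rightarrow> real \<Rightarrow> real \<Rightarrow> real" where
  "pn n x1 x2 = - kn n x1 * kn n (1 / x1) - kn n x2 * kn n (1 / x2)
                - kn n (x1 / x2) * kn n (x2 / x1)"

definition qn :: "nat \<Rightarrow> real \<Rightarrow> real \<Rightarrow> real" where
  "qn n x1 x2 = kn n x1 * kn n (1 / x2) * kn n (x2 / x1)
              + kn n x2 * kn n (1 / x1) * kn n (x1 / x2)"

end

theory Submission
  imports Defs
begin

text \<open>The substitution \<open>y \<mapsto> x / y\<close> exchanges the arguments \<open>y \<leftrightarrow> x / y\<close> and
  \<open>1 / y \<leftrightarrow> y / x\<close> and fixes \<open>x\<close>, \<open>1 / x\<close>; it therefore only permutes the factors
  of \<open>p\<^sub>n\<close> and \<open>q\<^sub>n\<close>, and with them the determinant. Since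
  \<open>x powr (1 - \<alpha>) = x / x powr \<alpha>\<close>, this is the claimed symmetry.\<close>

lemma det_A3: "det (A3 n x1 x2) = delta n ^ 3 + pn n x1 x2 * delta n + qn n x1 x2"
  unfolding A3_def pn_def qn_def det_3
  by (simp add: vector_3 algebra_simps power3_eq_cube)

lemma pn_div_right:
  fixes x y :: real
  assumes "x \<noteq> 0" "y \<noteq> 0"
  shows "pn n x (x / y) = pn n x y"
proof -
  have swapped: "1 / (x / y) = y / x" "x / (x / y) = y"
    using assms by (simp_all add: field_simps)
  show ?thesis
    unfolding pn_def swapped using assms by (simp add: algebra_simps)
qed

lemma qn_div_right:
  fixes x y :: real
  assumes "x \<noteq> 0" "y \<noteq> 0"
  shows "qn n x (x / y) = qn n x y"
proof -
  have swapped: "1 / (x / y) = y / x" "x / (x / y) = y" "x / y / x = 1 / y"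
    using assms by (simp_all add: field_simps)
  show ?thesis
    unfolding qn_def swapped using assms by (simp add: algebra_simps)
qed

theorem lemma3:
  fixes n :: nat and x \<alpha> :: real
  assumes "n \<ge> 2" and "x > 0"
  shows "det (A3 n x (x powr \<alpha>)) = det (A3 n x (x powr (1 - \<alpha>)))
       \<and> pn n x (x powr \<alpha>) = pn n x (x powr (1 - \<alpha>))
       \<and> qn n x (x powr \<alpha>) = qn n x (x powr (1 - \<alpha>))"
proof -
  have swap: "x powr (1 - \<alpha>) = x / x powr \<alpha>"
    using \<open>x > 0\<close> by (simp add: powr_diff)
  have "x powr \<alpha> \<noteq> 0"
    using \<open>x > 0\<close> by simp
  then have "pn n x (x powr \<alpha>) = pn n x (x powr (1 - \<alpha>))"
    and "qn n x (x powr \<alpha>) = qn n x (x powr (1 - \<alpha>))"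
    using \<open>x > 0\<close> unfolding swap by (simp_all add: pn_div_right qn_div_right)
  then show ?thesis
    by (simp add: det_A3)
qed

end
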